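(* Let $X$ be a regular Lusin space and let $f:X\to\mathbb{R}$ be quasicontinuous. Then the set $D_f=\{x\in X: f \text{ is discontinuous at } x\}$ is countable.
   Context: All spaces are assumed regular. A Hausdorff space $X$ is a Lusin space (in the sense of Kunen) if (a) every nowhere dense subset of $X$ is countable, (b) $X$ has at most countably many isolated points, and (c) $X$ is uncountable. A function $f:X\to Y$ is quasicontinuous if for every $x\in X$, every open $V\ni f(x)$ and every open $U\ni x$ there is a nonempty open $W\subseteq U$ with $f(W)\subseteq V$. *)

theory Defs
  imports "HOL-Analysis.Analysis"
begin

definition nowhere_dense_in :: "'a topology \<Rightarrow> 'a set \<Rightarrow> bool" where
  "nowhere_dense_in X S \<longleftrightarrow> S \<subseteq> topspace X \<and> X interior_of (X closure_of S) = {}"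

definition isolated_points_of :: "'a topology \<Rightarrow> 'a set" where
  "isolated_points_of X = {x \<in> topspace X. openin X {x}}"

definition Lusin_space :: "'a topology \<Rightarrow> bool" where
  "Lusin_space X \<longleftrightarrow> Hausdorff_space X
     \<and> (\<forall>S. nowhere_dense_in X S \<longrightarrow> countable S)
     \<and> countable (isolated_points_of X)
     \<and> uncountable (topspace X)"

definition continuous_at_pt :: "'a topology \<Rightarrow> ('a \<Rightarrow> real) \<Rightarrow> 'a \<Rightarrow> bool" where
  "continuous_at_pt X f x \<longleftrightarrow>
     (\<forall>V. open V \<and> f x \<in> V \<longrightarrow> (\<exists>U. openin X U \<and> x \<in> U \<and> f ` U \<subseteq> V))"

definition quasicontinuous_on :: "'a topology \<Rightarrow> ('a \<Rightarrow> real) \<Rightarrow> bool" where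
  "quasicontinuous_on X f \<longleftrightarrow>
     (\<forall>x \<in> topspace X. \<forall>V U. open V \<and> f x \<in> V \<and> openin X U \<and> x \<in> U \<longrightarrow>
        (\<exists>W. openin X W \<and> W \<noteq> {} \<and> W \<subseteq> U \<and> f ` W \<subseteq> V))"

end

theory Submission
  imports Defs
begin

text \<open>
  Fix a countable base \<B> of the reals. If f is discontinuous at x, then some C \<in> \<B> containing
  f x has a preimage whose interior misses x, while quasicontinuity puts x in the closure
  of that interior. So x lies on the frontier of the interior of the preimage of C, and
  frontiers of open sets are nowhere dense, hence countable in a Lusin space.
\<close>

lemma nowhere_dense_frontier_of_openin:
  assumes "openin X U"
  shows "nowhere_dense_in X (X frontier_of U)"
proof -
  have "X interior_of (X frontier_of U) = {}"
  proof (rule ccontr)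
    assume "X interior_of (X frontier_of U) \<noteq> {}"
    then obtain x where x: "x \<in> X interior_of (X frontier_of U)"
      by blast
    then have "x \<in> X closure_of U"
      using interior_of_subset frontier_of_openin[OF assms] by fastforce
    then obtain y where "y \<in> U" "y \<in> X interior_of (X frontier_of U)"
      using x by (meson in_closure_of openin_interior_of)
    then show False
      using interior_of_subset frontier_of_openin[OF assms] by fastforce
  qed
  then show ?thesis
    unfolding nowhere_dense_in_def
    by (simp add: closedin_frontier_of closure_of_closedin frontier_of_subset_topspace)
qed

lemma quasicontinuous_on_in_closure_of_interior_of_preimage:
  assumes "quasicontinuous_on X f" "x \<in> topspace X" "open V" "f x \<in> V"
  shows "x \<in> X closure_of (X interior_of {y \<in> topspace X. f y \<in> V})"
  unfolding in_closure_of
proof (intro conjI allI impI assms(2))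
  fix T
  assume "x \<in> T \<and> openin X T"
  then obtain W where W: "openin X W" "W \<noteq> {}" "W \<subseteq> T" "f ` W \<subseteq> V"
    using assms unfolding quasicontinuous_on_def by meson
  moreover have "W \<subseteq> {y \<in> topspace X. f y \<in> V}"
    using W openin_subset by blast
  ultimately have "W \<subseteq> X interior_of {y \<in> topspace X. f y \<in> V}"
    by (simp add: interior_of_maximal)
  then show "\<exists>y. y \<in> X interior_of {y \<in> topspace X. f y \<in> V} \<and> y \<in> T"
    using W by blast
qed

lemma not_continuous_at_pt_imp_not_in_interior_of_preimage:
  assumes "\<not> continuous_at_pt X f x"
  obtains V where "open V" "f x \<in> V" "x \<notin> X interior_of {y \<in> topspace X. f y \<in> V}"
proof -
  obtain V where V: "open V" "f x \<in> V"
    and no_nbhd: "\<And>U. openin X U \<Longrightarrow> x \<in> U \<Longrightarrow> \<not> f ` U \<subseteq> V"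
    using assms unfolding continuous_at_pt_def by blast
  have "f ` (X interior_of {y \<in> topspace X. f y \<in> V}) \<subseteq> V"
    using interior_of_subset by fastforce
  then have "x \<notin> X interior_of {y \<in> topspace X. f y \<in> V}"
    using no_nbhd[OF openin_interior_of] by blast
  with V show thesis
    by (rule that)
qed

lemma discontinuity_points_subset_frontiers:
  assumes "quasicontinuous_on X f"
    and open_base: "\<And>C. C \<in> \<B> \<Longrightarrow> open C"
    and base: "\<And>S. open S \<Longrightarrow> \<exists>\<U>. \<U> \<subseteq> \<B> \<and> S = \<Union>\<U>"
  shows "{x \<in> topspace X. \<not> continuous_at_pt X f x}
           \<subseteq> (\<Union>C\<in>\<B>. X frontier_of (X interior_of {y \<in> topspace X. f y \<in> C}))"
proof
  fix x
  assume "x \<in> {x \<in> topspace X. \<not> continuous_at_pt X f x}"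
  then have x: "x \<in> topspace X" and "\<not> continuous_at_pt X f x"
    by auto
  from this(2) obtain V where V: "open V" "f x \<in> V"
    and x_notin: "x \<notin> X interior_of {y \<in> topspace X. f y \<in> V}"
    by (rule not_continuous_at_pt_imp_not_in_interior_of_preimage)
  then obtain C where C: "C \<in> \<B>" "f x \<in> C" "C \<subseteq> V"
    using base by blast
  have "X interior_of {y \<in> topspace X. f y \<in> C} \<subseteq> X interior_of {y \<in> topspace X. f y \<in> V}"
    using C(3) by (intro interior_of_mono) auto
  moreover have "x \<in> X closure_of (X interior_of {y \<in> topspace X. f y \<in> C})"
    using quasicontinuous_on_in_closure_of_interior_of_preimage[OF assms(1) x open_base] C
    by blast
  ultimately show "x \<in> (\<Union>C\<in>\<B>. X frontier_of (X interior_of {y \<in> topspace X. f y \<in> C}))"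
    using x_notin C(1) by (auto simp: frontier_of_openin)
qed

theorem corollary3p5:
  fixes X :: "'a topology" and f :: "'a \<Rightarrow> real"
  assumes "regular_space X" and "Lusin_space X" and "quasicontinuous_on X f"
  shows "countable {x \<in> topspace X. \<not> continuous_at_pt X f x}"
proof -
  obtain \<B> :: "real set set" where "countable \<B>" and open_base: "\<And>C. C \<in> \<B> \<Longrightarrow> open C"
    and base: "\<And>S. open S \<Longrightarrow> \<exists>\<U>. \<U> \<subseteq> \<B> \<and> S = \<Union>\<U>"
    using univ_second_countable by blast
  have countable_nowhere_dense: "\<And>S. nowhere_dense_in X S \<Longrightarrow> countable S"
    using assms(2) unfolding Lusin_space_def by blast
  have "{x \<in> topspace X. \<not> continuous_at_pt X f x}
          \<subseteq> (\<Union>C\<in>\<B>. X frontier_of (X interior_of {y \<in> topspace X. f y \<in> C}))"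
    using assms(3) open_base base by (rule discontinuity_points_subset_frontiers)
  moreover have "countable (\<Union>C\<in>\<B>. X frontier_of (X interior_of {y \<in> topspace X. f y \<in> C}))"
    using \<open>countable \<B>\<close>
    by (intro countable_UN countable_nowhere_dense nowhere_dense_frontier_of_openin openin_interior_of)
  ultimately show ?thesis
    by (rule countable_subset)
qed

end
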